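(* Let $F$ satisfy the standing assumptions below, $\beta\in(0,1)$, $D>0$, $\mu\ge0$, and run the general conversion scheme below with any online learner and any choices of $\mathbf{x}_t$. Let $\mathbf{u}_t:=-D\frac{\sum_{s=1}^t\beta^{t-s}\nabla F(\mathbf{y}_s)}{\|\sum_{s=1}^t\beta^{t-s}\nabla F(\mathbf{y}_s)\|}$, and for $t\in[T]$ let $\mathbf{Y}_t$ equal $\mathbf{y}_s$ with probability $q_{t,s}:=\beta^{t-s}\frac{1-\beta}{1-\beta^t}$ ($s=1,\dots,t$). Then for every $n\in[T]$, $$\mathbb{E}\sum_{t=1}^n\beta^{n-t}\big(F(\mathbf{w}_t)-F(\mathbf{x}_t)\big)\le-D\frac{1-\beta^n}{1-\beta}\,\mathbb{E}\|\mathbb{E}_{\mathbf{Y}_n}\nabla F(\mathbf{Y}_n)\|+\frac{\sigma D}{\sqrt{1-\beta}}+\mathbb{E}[\mathrm{Regret}^\beta_n(\mathbf{u}_n)]+\mathbb{E}\sum_{t=1}^n\beta^{n-t}\Big(-\frac\mu2\|\Delta_t\|^2+\frac\mu2D^2\Big),$$ where $\mathbb{E}_{\mathbf{Y}_n}\nabla F(\mathbf{Y}_n)=\sum_{s=1}^nq_{n,s}\nabla F(\mathbf{y}_s)$.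
   Context: Norms are Euclidean. Standing assumptions: $F:\mathbb{R}^d\to\mathbb{R}$ differentiable; for all $\mathbf{x},\mathbf{w}$, $F(\mathbf{x})-F(\mathbf{w})=\int_0^1\langle\nabla F(\mathbf{w}+t(\mathbf{x}-\mathbf{w})),\mathbf{x}-\mathbf{w}\rangle\,dt$; $\|\nabla F\|\le G$ everywhere. The stochastic gradient oracle at $\mathbf{x}$ independently returns $\mathbf{g}$ with $\mathbb{E}\mathbf{g}=\nabla F(\mathbf{x})$, $\mathbb{E}\|\mathbf{g}-\nabla F(\mathbf{x})\|^2\le\sigma^2$. General conversion scheme: input $\mathbf{x}_0=\mathbf{w}_0$, $T$, $\mu\ge0$, online learner $\mathcal{A}$ (output $\Delta_t$ at round $t$ based on $\ell_1,\dots,\ell_{t-1}$). For $t=1,\dots,T$: receive $\Delta_t$; choose $\mathbf{x}_t$ arbitrarily (may depend on everything so far including $\Delta_t$, not on $s_t,\mathbf{g}_t$ or later randomness); $\mathbf{w}_t=\mathbf{x}_t+\Delta_t$; $\mathbf{y}_t=\mathbf{x}_t+s_t\Delta_t$, $s_t\sim\mathrm{Unif}[0,1]$ i.i.d.; $\mathbf{g}_t$ = oracle output at $\mathbf{y}_t$; send $\ell_t(\mathbf{v})=\langle\mathbf{g}_t,\mathbf{v}\rangle+\frac\mu2\|\mathbf{v}\|^2$ to $\mathcal{A}$. $\mathrm{Regret}^\beta_n(\mathbf{u}) := \sum_{t=1}^n\beta^{n-t}(\ell_t(\Delta_t)-\ell_t(\mathbf{u}))$. *)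

theory Defs
  imports "HOL-Probability.Probability"
begin

text \<open>The randomness of round t is the
  seed pair omega t = (s_t, xi_t): s_t is the uniform scalar, xi_t is the seed fed to the
  stochastic oracle Orc (so the oracle output at y is Orc y xi_t). The learner A maps the list
  of losses [l_1,...,l_(t-1)] to Delta_t; X t omega is the (arbitrary) choice of x_t.\<close>

fun conv_losses ::
  "(('a::euclidean_space \<Rightarrow> real) list \<Rightarrow> 'a) \<Rightarrow> (nat \<Rightarrow> (nat \<Rightarrow> real \<times> 'b) \<Rightarrow> 'a)
   \<Rightarrow> ('a \<Rightarrow> 'b \<Rightarrow> 'a) \<Rightarrow> real \<Rightarrow> nat \<Rightarrow> (nat \<Rightarrow> real \<times> 'b) \<Rightarrow> ('a \<Rightarrow> real) list" where
  "conv_losses A X Orc \<mu> 0 \<omega> = []"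
| "conv_losses A X Orc \<mu> (Suc n) \<omega> =
     (let L = conv_losses A X Orc \<mu> n \<omega>;
          \<Delta> = A L;
          y = X (Suc n) \<omega> + fst (\<omega> (Suc n)) *\<^sub>R \<Delta>;
          g = Orc y (snd (\<omega> (Suc n)))
      in L @ [\<lambda>v. g \<bullet> v + \<mu> / 2 * (norm v)\<^sup>2])"

definition conv_Delta where
  "conv_Delta A X Orc \<mu> t \<omega> = A (conv_losses A X Orc \<mu> (t - 1) \<omega>)"

definition conv_w where
  "conv_w A X Orc \<mu> t \<omega> = X t \<omega> + conv_Delta A X Orc \<mu> t \<omega>"

definition conv_y where
  "conv_y A X Orc \<mu> t \<omega> = X t \<omega> + fst (\<omega> t) *\<^sub>R conv_Delta A X Orc \<mu> t \<omega>"

definition conv_g where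
  "conv_g A X Orc \<mu> t \<omega> = Orc (conv_y A X Orc \<mu> t \<omega>) (snd (\<omega> t))"

definition conv_loss where
  "conv_loss A X Orc \<mu> t \<omega> v = conv_g A X Orc \<mu> t \<omega> \<bullet> v + \<mu> / 2 * (norm v)\<^sup>2"

definition regret_beta :: "real \<Rightarrow> nat \<Rightarrow> (nat \<Rightarrow> 'a \<Rightarrow> real) \<Rightarrow> (nat \<Rightarrow> 'a) \<Rightarrow> 'a \<Rightarrow> real" where
  "regret_beta \<beta> n loss \<Delta> u = (\<Sum>t=1..n. \<beta> ^ (n - t) * (loss t (\<Delta> t) - loss t u))"

definition qw :: "real \<Rightarrow> nat \<Rightarrow> nat \<Rightarrow> real" where
  "qw \<beta> t s = \<beta> ^ (t - s) * (1 - \<beta>) / (1 - \<beta> ^ t)"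

end

theory Submission
  imports Defs
begin

(*
  Write z_t = g_t - grad F(y_t) for the oracle noise. Given all rounds but t, the draw s_t is
  uniform while x_t and Delta_t are fixed, so the fundamental theorem of calculus along
  [x_t, w_t] gives E[F(w_t) - F(x_t)] = E<grad F(y_t), Delta_t>; averaging over the fresh oracle
  seed of round t alone kills z_t, so this also equals E<g_t, Delta_t>. Pointwise, the
  discounted sum of <g_t, Delta_t> is the discounted regret against u_n plus
  <sum beta^(n-t) g_t, u_n> plus the mu-terms, and for S = sum beta^(n-t) grad F(y_t) the choice
  u_n = -D S/|S| gives <sum beta^(n-t) g_t, u_n> <= -D |S| + D |sum beta^(n-t) z_t|. Noises of
  different rounds are orthogonal in L^2, so E |sum beta^(n-t) z_t| is at most
  sigma (sum beta^(2(n-t)))^(1/2) <= sigma / sqrt(1 - beta). Finally |S| is (1 - beta^n)/(1 - beta)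
  times the norm of the q_{n,s}-average of the gradients.
*)

lemma power2_norm_add_le:
  fixes x y :: "'a::real_normed_vector"
  shows "(norm (x + y))\<^sup>2 \<le> 2 * (norm x)\<^sup>2 + 2 * (norm y)\<^sup>2"
proof -
  have "(norm (x + y))\<^sup>2 \<le> (norm x + norm y)\<^sup>2"
    by (simp add: norm_triangle_ineq power_mono)
  also have "\<dots> \<le> 2 * (norm x)\<^sup>2 + 2 * (norm y)\<^sup>2"
    using sum_squares_bound[of "norm x" "norm y"] by (simp add: power2_sum)
  finally show ?thesis .
qed

lemma norm_scaleR_normalize_le:
  fixes S :: "'a::real_normed_vector"
  assumes "0 \<le> D"
  shows "norm (- (D / norm S) *\<^sub>R S) \<le> D"
  using assms by (cases "S = 0") auto

lemma inner_scaleR_normalize_le: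
  fixes S E :: "'a::real_inner"
  assumes "0 \<le> D"
  shows "(S + E) \<bullet> (- (D / norm S) *\<^sub>R S) \<le> - D * norm S + D * norm E"
proof -
  let ?u = "- (D / norm S) *\<^sub>R S"
  have "S \<bullet> ?u = - D * norm S"
    by (cases "S = 0") (auto simp: power2_norm_eq_inner[symmetric] power2_eq_square)
  moreover have "E \<bullet> ?u \<le> norm E * norm ?u"
    by (rule norm_cauchy_schwarz)
  moreover have "norm E * norm ?u \<le> norm E * D"
    using assms by (intro mult_left_mono norm_scaleR_normalize_le) auto
  ultimately show ?thesis
    by (simp only: inner_add_left) (simp add: mult.commute)
qed

definition square_integrable :: "'m measure \<Rightarrow> ('m \<Rightarrow> 'a::euclidean_space) \<Rightarrow> bool" where
  "square_integrable M f \<longleftrightarrow> f \<in> borel_measurable M \<and> integrable M (\<lambda>x. (norm (f x))\<^sup>2)"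

lemma square_integrable_add:
  assumes "square_integrable M f" "square_integrable M g"
  shows "square_integrable M (\<lambda>x. f x + g x)"
proof -
  have int: "integrable M (\<lambda>x. 2 * (norm (f x))\<^sup>2 + 2 * (norm (g x))\<^sup>2)"
    using assms unfolding square_integrable_def by auto
  have "norm ((norm (f x + g x))\<^sup>2) \<le> norm (2 * (norm (f x))\<^sup>2 + 2 * (norm (g x))\<^sup>2)" for x
    using power2_norm_add_le[of "f x" "g x"] by simp
  then show ?thesis
    using assms unfolding square_integrable_def
    by (auto intro!: Bochner_Integration.integrable_bound[OF int])
qed

lemma square_integrable_scaleR:
  "square_integrable M f \<Longrightarrow> square_integrable M (\<lambda>x. c *\<^sub>R f x)"
  unfolding square_integrable_def by (auto simp: power_mult_distrib)

lemma square_integrable_sum: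
  "(\<And>i. i \<in> I \<Longrightarrow> square_integrable M (f i)) \<Longrightarrow> square_integrable M (\<lambda>x. \<Sum>i\<in>I. f i x)"
proof (induction I rule: infinite_finite_induct)
  case (insert i I)
  then show ?case using square_integrable_add[of M "f i" "\<lambda>x. \<Sum>i\<in>I. f i x"] by simp
qed (auto simp: square_integrable_def)

lemma square_integrable_bounded:
  assumes "finite_measure M" "f \<in> borel_measurable M" "\<And>x. x \<in> space M \<Longrightarrow> norm (f x) \<le> C"
  shows "square_integrable M f"
proof -
  interpret finite_measure M by fact
  have "integrable M (\<lambda>x. (norm (f x))\<^sup>2)"
    using assms by (intro integrable_const_bound[where B="C\<^sup>2"]) (auto intro!: AE_I2 power_mono)
  then show ?thesis using assms unfolding square_integrable_def by auto
qed

lemma integrable_inner_square_integrable: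
  assumes "square_integrable M f" "square_integrable M g"
  shows "integrable M (\<lambda>x. f x \<bullet> g x)"
proof -
  have int: "integrable M (\<lambda>x. (norm (f x))\<^sup>2 + (norm (g x))\<^sup>2)"
    using assms unfolding square_integrable_def by auto
  have "norm (f x \<bullet> g x) \<le> norm ((norm (f x))\<^sup>2 + (norm (g x))\<^sup>2)" for x
  proof -
    have "norm (f x \<bullet> g x) \<le> norm (f x) * norm (g x)"
      by (simp add: Cauchy_Schwarz_ineq2)
    also have "\<dots> \<le> 2 * norm (f x) * norm (g x)"
      by simp
    also have "\<dots> \<le> (norm (f x))\<^sup>2 + (norm (g x))\<^sup>2"
      by (rule sum_squares_bound)
    finally show ?thesis
      by simp
  qed
  then show ?thesis
    using assms unfolding square_integrable_def
    by (auto intro!: Bochner_Integration.integrable_bound[OF int])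
qed

lemma integrable_norm_square_integrable:
  assumes "finite_measure M" "square_integrable M f"
  shows "integrable M (\<lambda>x. norm (f x))"
proof -
  interpret finite_measure M by fact
  have int: "integrable M (\<lambda>x. 1 + (norm (f x))\<^sup>2)"
    using assms unfolding square_integrable_def by auto
  have "norm (norm (f x)) \<le> norm (1 + (norm (f x))\<^sup>2)" for x
  proof -
    have "norm (f x) \<le> 1 + (norm (f x))\<^sup>2"
      using sum_squares_bound[of "norm (f x)" 1] norm_ge_zero[of "f x"]
      by (simp only: mult_1_right one_power2)
    then show ?thesis
      by simp
  qed
  then show ?thesis
    using assms unfolding square_integrable_def
    by (auto intro!: Bochner_Integration.integrable_bound[OF int])
qed

lemma (in prob_space) integral_norm_le_sqrt_integral_power2:
  assumes "square_integrable M f"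
  shows "(\<integral>x. norm (f x) \<partial>M) \<le> sqrt (\<integral>x. (norm (f x))\<^sup>2 \<partial>M)"
proof -
  have "0 \<le> variance (\<lambda>x. norm (f x))"
    by (rule variance_positive)
  also have "\<dots> = (\<integral>x. (norm (f x))\<^sup>2 \<partial>M) - (\<integral>x. norm (f x) \<partial>M)\<^sup>2"
    using assms
    by (intro variance_eq integrable_norm_square_integrable[OF finite_measure_axioms])
      (auto simp: square_integrable_def)
  finally show ?thesis
    by (intro real_le_rsqrt) simp
qed

lemma integral_norm_sum_orthogonal:
  assumes "finite I" "\<And>s. s \<in> I \<Longrightarrow> square_integrable M (Z s)"
    and orth: "\<And>s t. s \<in> I \<Longrightarrow> t \<in> I \<Longrightarrow> s \<noteq> t \<Longrightarrow> (\<integral>x. Z s x \<bullet> Z t x \<partial>M) = 0"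
  shows "(\<integral>x. (norm (\<Sum>s\<in>I. Z s x))\<^sup>2 \<partial>M) = (\<Sum>s\<in>I. \<integral>x. (norm (Z s x))\<^sup>2 \<partial>M)"
proof -
  have int: "integrable M (\<lambda>x. Z s x \<bullet> Z t x)" if "s \<in> I" "t \<in> I" for s t
    using assms(2) that by (intro integrable_inner_square_integrable)
  have "(\<integral>x. (norm (\<Sum>s\<in>I. Z s x))\<^sup>2 \<partial>M) = (\<integral>x. (\<Sum>t\<in>I. \<Sum>s\<in>I. Z s x \<bullet> Z t x) \<partial>M)"
    by (simp add: power2_norm_eq_inner inner_sum_left inner_sum_right)
  also have "\<dots> = (\<Sum>t\<in>I. \<Sum>s\<in>I. \<integral>x. Z s x \<bullet> Z t x \<partial>M)"
    using int by (simp add: Bochner_Integration.integral_sum Bochner_Integration.integrable_sum)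
  also have "\<dots> = (\<Sum>t\<in>I. \<integral>x. Z t x \<bullet> Z t x \<partial>M)"
    using orth \<open>finite I\<close> by (intro sum.cong refl) (simp add: sum.remove)
  finally show ?thesis
    by (simp add: power2_norm_eq_inner)
qed

lemma square_integrable_scaleR_normalize:
  assumes "finite_measure M" "square_integrable M S" "0 \<le> D"
  shows "square_integrable M (\<lambda>x. - (D / norm (S x)) *\<^sub>R S x)"
proof (rule square_integrable_bounded[OF assms(1)])
  have [measurable]: "S \<in> borel_measurable M"
    using assms(2) by (simp add: square_integrable_def)
  show "(\<lambda>x. - (D / norm (S x)) *\<^sub>R S x) \<in> borel_measurable M"
    by measurable
  show "norm (- (D / norm (S x)) *\<^sub>R S x) \<le> D" for x
    using assms(3) by (rule norm_scaleR_normalize_le)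
qed

lemma sum_power2_discount_le:
  fixes \<beta> :: real
  assumes "0 \<le> \<beta>" "\<beta> < 1"
  shows "(\<Sum>s=1..n. (\<beta> ^ (n - s))\<^sup>2) \<le> 1 / (1 - \<beta>)"
proof -
  have "(\<Sum>s=1..n. (\<beta> ^ (n - s))\<^sup>2) \<le> (\<Sum>s=1..n. \<beta> ^ (n - s))"
  proof (rule sum_mono)
    fix s
    have "0 \<le> \<beta> ^ (n - s)" "\<beta> ^ (n - s) \<le> 1" using assms by (auto intro: power_le_one)
    then show "(\<beta> ^ (n - s))\<^sup>2 \<le> \<beta> ^ (n - s)" by (simp add: power2_eq_square mult_le_one mult_left_le)
  qed
  also have "\<dots> = (\<Sum>k<n. \<beta> ^ k)"
    by (rule sum.reindex_bij_witness[of _ "\<lambda>k. n - k" "\<lambda>s. n - s"]) auto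
  also have "\<dots> = (1 - \<beta> ^ n) / (1 - \<beta>)"
    using assms by (simp add: sum_gp_strict)
  also have "\<dots> \<le> 1 / (1 - \<beta>)"
    using assms by (intro divide_right_mono) auto
  finally show ?thesis .
qed

lemma norm_sum_discount_eq_norm_sum_qw:
  fixes v :: "nat \<Rightarrow> 'a::real_normed_vector"
  assumes "0 < \<beta>" "\<beta> < 1" "0 < n"
  shows "norm (\<Sum>s=1..n. \<beta> ^ (n - s) *\<^sub>R v s)
    = (1 - \<beta> ^ n) / (1 - \<beta>) * norm (\<Sum>s=1..n. qw \<beta> n s *\<^sub>R v s)"
proof -
  have pos: "0 < 1 - \<beta> ^ n" "0 < 1 - \<beta>"
    using assms by (simp_all add: power_less_one_iff)
  have "(\<Sum>s=1..n. qw \<beta> n s *\<^sub>R v s) = ((1 - \<beta>) / (1 - \<beta> ^ n)) *\<^sub>R (\<Sum>s=1..n. \<beta> ^ (n - s) *\<^sub>R v s)"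
    unfolding scaleR_sum_right by (intro sum.cong refl) (simp add: qw_def)
  then show ?thesis
    using pos by simp
qed

lemma sum_inner_le_regret_beta:
  fixes g \<Delta> :: "nat \<Rightarrow> 'a::real_inner"
  assumes "0 \<le> \<beta>" "0 \<le> \<mu>" "norm u \<le> D"
  shows "(\<Sum>t=1..n. \<beta> ^ (n - t) * (g t \<bullet> \<Delta> t))
    \<le> (\<Sum>t=1..n. \<beta> ^ (n - t) *\<^sub>R g t) \<bullet> u
      + regret_beta \<beta> n (\<lambda>t v. g t \<bullet> v + \<mu> / 2 * (norm v)\<^sup>2) \<Delta> u
      + (\<Sum>t=1..n. \<beta> ^ (n - t) * (- \<mu> / 2 * (norm (\<Delta> t))\<^sup>2 + \<mu> / 2 * D\<^sup>2))"
    (is "_ \<le> ?rhs")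
proof -
  have "(norm u)\<^sup>2 \<le> D\<^sup>2"
    using assms(3) by (intro power_mono) auto
  then have "0 \<le> (\<Sum>t=1..n. \<beta> ^ (n - t) * (\<mu> / 2 * (D\<^sup>2 - (norm u)\<^sup>2)))"
    using assms by (intro sum_nonneg mult_nonneg_nonneg) auto
  moreover have "?rhs = (\<Sum>t=1..n. \<beta> ^ (n - t) * (g t \<bullet> \<Delta> t) + \<beta> ^ (n - t) * (\<mu> / 2 * (D\<^sup>2 - (norm u)\<^sup>2)))"
    unfolding regret_beta_def inner_sum_left
    by (simp only: sum.distrib[symmetric]) (intro sum.cong refl, simp add: algebra_simps)
  ultimately show ?thesis
    by (simp add: sum.distrib)
qed

lemma sum_inner_le_normalized_regret_beta:
  fixes g h \<Delta> :: "nat \<Rightarrow> 'a::real_inner" and n :: nat and \<beta> \<mu> D :: real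
  assumes "0 \<le> \<beta>" "0 \<le> \<mu>" "0 \<le> D"
  defines "S \<equiv> \<Sum>t=1..n. \<beta> ^ (n - t) *\<^sub>R h t"
  shows "(\<Sum>t=1..n. \<beta> ^ (n - t) * (g t \<bullet> \<Delta> t))
    \<le> - D * norm S + D * norm (\<Sum>t=1..n. \<beta> ^ (n - t) *\<^sub>R (g t - h t))
      + regret_beta \<beta> n (\<lambda>t v. g t \<bullet> v + \<mu> / 2 * (norm v)\<^sup>2) \<Delta> (- (D / norm S) *\<^sub>R S)
      + (\<Sum>t=1..n. \<beta> ^ (n - t) * (- \<mu> / 2 * (norm (\<Delta> t))\<^sup>2 + \<mu> / 2 * D\<^sup>2))"
proof -
  have sum_eq: "(\<Sum>t=1..n. \<beta> ^ (n - t) *\<^sub>R g t) = S + (\<Sum>t=1..n. \<beta> ^ (n - t) *\<^sub>R (g t - h t))"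
    by (simp add: S_def scaleR_diff_right sum_subtractf)
  show ?thesis
    using sum_inner_le_regret_beta[OF assms(1,2) norm_scaleR_normalize_le[OF assms(3)], of n g \<Delta> S]
      inner_scaleR_normalize_le[OF assms(3), of S "\<Sum>t=1..n. \<beta> ^ (n - t) *\<^sub>R (g t - h t)"]
    unfolding sum_eq by linarith
qed

lemma integral_uniform_unit_interval:
  fixes f :: "real \<Rightarrow> real"
  assumes f: "(f has_integral I) {0..1}" and meas: "f \<in> borel_measurable borel"
    and bnd: "\<And>s. \<bar>f s\<bar> \<le> B"
  shows "(\<integral>s. f s \<partial>uniform_measure lborel {0..1}) = I"
proof -
  let ?U = "uniform_measure lborel {0..1::real}"
  have U: "?U = density lborel (\<lambda>s. ennreal (indicator {0..1::real} s))"
    unfolding uniform_measure_def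
    by (auto simp: emeasure_lborel_Icc fun_eq_iff intro!: arg_cong[where f="density lborel"]
        split: split_indicator)
  interpret U: prob_space ?U
    by (rule prob_space_uniform_measure) (auto simp: emeasure_lborel_Icc)
  have "integrable ?U f"
    using meas bnd by (intro U.integrable_const_bound[where B=B]) auto
  then have int: "integrable lborel (\<lambda>s. indicator {0..1::real} s *\<^sub>R f s)"
    unfolding U using meas by (subst (asm) integrable_density) auto
  have "(\<integral>s. f s \<partial>?U) = (\<integral>s. indicator {0..1::real} s *\<^sub>R f s \<partial>lborel)"
    unfolding U using meas by (intro integral_density) auto
  also have "\<dots> = I"
  proof (rule has_integral_unique[OF has_integral_integral_lborel[OF int]])
    have restrict: "(\<lambda>s. indicator {0..1::real} s *\<^sub>R f s) = (\<lambda>s. if s \<in> {0..1} then f s else 0)"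
      by (auto simp: indicator_def)
    show "((\<lambda>s. indicator {0..1::real} s *\<^sub>R f s) has_integral I) UNIV"
      using f unfolding restrict has_integral_restrict_UNIV .
  qed
  finally show ?thesis .
qed

lemma (in product_sigma_finite) integral_PiM_eq_by_coordinate:
  fixes f g :: "_ \<Rightarrow> real"
  assumes "finite I" "i \<in> I" "integrable (Pi\<^sub>M I M) f" "integrable (Pi\<^sub>M I M) g"
    and "\<And>x. x \<in> space (Pi\<^sub>M (I - {i}) M) \<Longrightarrow>
      (\<integral>y. f (x(i := y)) \<partial>M i) = (\<integral>y. g (x(i := y)) \<partial>M i)"
  shows "integral\<^sup>L (Pi\<^sub>M I M) f = integral\<^sup>L (Pi\<^sub>M I M) g"
proof -
  have I: "insert i (I - {i}) = I"
    using assms(2) by auto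
  have iterated: "integral\<^sup>L (Pi\<^sub>M I M) h = (\<integral>x. (\<integral>y. h (x(i := y)) \<partial>M i) \<partial>Pi\<^sub>M (I - {i}) M)"
    if "integrable (Pi\<^sub>M I M) h" for h :: "_ \<Rightarrow> real"
  proof -
    have "integral\<^sup>L (Pi\<^sub>M (insert i (I - {i})) M) h
        = (\<integral>x. (\<integral>y. h (x(i := y)) \<partial>M i) \<partial>Pi\<^sub>M (I - {i}) M)"
      by (rule product_integral_insert) (use that assms(1) I in auto)
    then show ?thesis
      by (simp only: I)
  qed
  show ?thesis
    unfolding iterated[OF assms(3)] iterated[OF assms(4)]
    by (rule Bochner_Integration.integral_cong[OF refl assms(5)])
qed

lemma (in product_sigma_finite) nn_integral_PiM_le_by_coordinate:
  assumes "finite I" "i \<in> I" "prob_space (Pi\<^sub>M (I - {i}) M)" "f \<in> borel_measurable (Pi\<^sub>M I M)"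
    and "\<And>x. x \<in> space (Pi\<^sub>M (I - {i}) M) \<Longrightarrow> (\<integral>\<^sup>+y. f (x(i := y)) \<partial>M i) \<le> c"
  shows "(\<integral>\<^sup>+x. f x \<partial>Pi\<^sub>M I M) \<le> c"
proof -
  interpret J: prob_space "Pi\<^sub>M (I - {i}) M"
    by fact
  have I: "insert i (I - {i}) = I"
    using assms(2) by auto
  have "(\<integral>\<^sup>+x. f x \<partial>Pi\<^sub>M (insert i (I - {i})) M)
      = (\<integral>\<^sup>+x. (\<integral>\<^sup>+y. f (x(i := y)) \<partial>M i) \<partial>Pi\<^sub>M (I - {i}) M)"
    by (rule product_nn_integral_insert) (use assms(1,4) I in auto)
  also have "\<dots> \<le> (\<integral>\<^sup>+x. c \<partial>Pi\<^sub>M (I - {i}) M)"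
    using assms(5) by (intro nn_integral_mono) auto
  also have "\<dots> = c"
    by (simp add: J.emeasure_space_1)
  finally show ?thesis
    by (simp only: I)
qed

definition reseed :: "nat \<Rightarrow> 'b \<Rightarrow> (nat \<Rightarrow> real \<times> 'b) \<Rightarrow> nat \<Rightarrow> real \<times> 'b" where
  "reseed t \<xi> w = w(t := (fst (w t), \<xi>))"

lemma update_eq_reseed: "x(t := (s, \<xi>)) = reseed t \<xi> (x(t := (s, \<xi>')))"
  by (simp add: reseed_def)

locale seed_space =
  fixes P :: "'b measure" and T :: nat
  assumes prob_space_P: "prob_space P"
begin

abbreviation "U \<equiv> uniform_measure lborel {0..1::real}"
abbreviation "Seed \<equiv> U \<Otimes>\<^sub>M P"
abbreviation "\<Omega> \<equiv> \<Pi>\<^sub>M i\<in>{1..T}. Seed"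

lemma prob_space_U: "prob_space U"
  by (rule prob_space_uniform_measure) (auto simp: emeasure_lborel_Icc)

lemma prob_space_Seed: "prob_space Seed"
  using prob_space_U prob_space_P by (rule prob_space_pair)

lemma prob_space_PiM_Seed: "prob_space (Pi\<^sub>M I (\<lambda>_. Seed))"
  using prob_space_Seed by (rule prob_space_PiM)

lemma finite_measure_\<Omega>: "finite_measure \<Omega>"
  using prob_space_PiM_Seed[of "{1..T}"] by (simp add: prob_space_def)

lemma product_sigma_finite_Seed: "product_sigma_finite (\<lambda>_. Seed)"
  using prob_space_Seed unfolding product_sigma_finite_def by (simp add: prob_space_imp_sigma_finite)

lemma pair_sigma_finite_U_P: "pair_sigma_finite U P"
  using prob_space_U prob_space_P unfolding pair_sigma_finite_def by (simp add: prob_space_imp_sigma_finite)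

lemma space_Seed: "space Seed = UNIV \<times> space P"
  by (simp add: space_pair_measure)

lemma integral_Seed_fst:
  fixes f :: "real \<Rightarrow> real"
  assumes "f \<in> borel_measurable borel"
  shows "(\<integral>y. f (fst y) \<partial>Seed) = (\<integral>s. f s \<partial>U)"
proof -
  interpret P: prob_space P
    by (rule prob_space_P)
  have "f \<in> borel_measurable U"
    using assms by simp
  then have "(\<integral>y. f (fst y) \<partial>Seed) = integral\<^sup>L (distr Seed U fst) f"
    by (simp add: integral_distr)
  then show ?thesis
    by (simp add: P.distr_pair_fst)
qed

lemma update_in_space:
  "t \<in> {1..T} \<Longrightarrow> x \<in> space (Pi\<^sub>M ({1..T} - {t}) (\<lambda>_. Seed)) \<Longrightarrow> y \<in> space Seed \<Longrightarrow>
    x(t := y) \<in> space \<Omega>"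
  by (auto simp: space_PiM PiE_iff extensional_def)

lemma reseed_in_space:
  "t \<in> {1..T} \<Longrightarrow> \<omega> \<in> space \<Omega> \<Longrightarrow> \<xi> \<in> space P \<Longrightarrow> reseed t \<xi> \<omega> \<in> space \<Omega>"
  by (auto simp: reseed_def space_PiM PiE_iff extensional_def space_Seed)

lemma measurable_fst_round: "t \<in> {1..T} \<Longrightarrow> (\<lambda>\<omega>. fst (\<omega> t)) \<in> borel_measurable \<Omega>"
proof -
  assume "t \<in> {1..T}"
  then have "(\<lambda>\<omega>. fst (\<omega> t)) \<in> measurable \<Omega> U"
    using measurable_compose[OF measurable_component_singleton[of t "{1..T}" "\<lambda>_. Seed"] measurable_fst]
    by (simp add: comp_def)
  moreover have "measurable \<Omega> U = measurable \<Omega> borel"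
    by (rule measurable_cong_sets) auto
  ultimately show ?thesis
    by simp
qed

lemma measurable_snd_round: "t \<in> {1..T} \<Longrightarrow> (\<lambda>\<omega>. snd (\<omega> t)) \<in> measurable \<Omega> P"
  using measurable_compose[OF measurable_component_singleton[of t "{1..T}" "\<lambda>_. Seed"] measurable_snd]
  by (simp add: comp_def)

lemma measurable_update:
  assumes "t \<in> {1..T}" "x \<in> space (Pi\<^sub>M ({1..T} - {t}) (\<lambda>_. Seed))" "f \<in> borel_measurable \<Omega>"
  shows "(\<lambda>y. f (x(t := y))) \<in> borel_measurable Seed"
proof -
  have "insert t ({1..T} - {t}) = {1..T}"
    using assms(1) by auto
  then have "(\<lambda>y. x(t := y)) \<in> measurable Seed \<Omega>"
    using measurable_component_update[OF assms(2), of t] by simp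
  then show ?thesis
    using assms(3) by (rule measurable_compose)
qed

end

locale conversion = seed_space P T
  for P :: "'b measure" and T :: nat +
  fixes F :: "'a::euclidean_space \<Rightarrow> real" and gradF :: "'a \<Rightarrow> 'a" and G \<sigma> \<mu> :: real
    and Orc :: "'a \<Rightarrow> 'b \<Rightarrow> 'a" and A :: "('a \<Rightarrow> real) list \<Rightarrow> 'a"
    and X :: "nat \<Rightarrow> (nat \<Rightarrow> real \<times> 'b) \<Rightarrow> 'a"
  assumes grad: "\<And>x. (F has_derivative (\<lambda>h. gradF x \<bullet> h)) (at x)"
    and ftc: "\<And>x w. ((\<lambda>t. gradF (w + t *\<^sub>R (x - w)) \<bullet> (x - w)) has_integral (F x - F w)) {0..1}"
    and bnd: "\<And>x. norm (gradF x) \<le> G"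
    and O_meas: "(\<lambda>(x, \<xi>). Orc x \<xi>) \<in> borel_measurable (borel \<Otimes>\<^sub>M P)"
    and O_int: "\<And>x. integrable P (Orc x)"
    and O_mean: "\<And>x. (\<integral>\<xi>. Orc x \<xi> \<partial>P) = gradF x"
    and O_var_int: "\<And>x. integrable P (\<lambda>\<xi>. (norm (Orc x \<xi> - gradF x))\<^sup>2)"
    and O_var: "\<And>x. (\<integral>\<xi>. (norm (Orc x \<xi> - gradF x))\<^sup>2 \<partial>P) \<le> \<sigma>\<^sup>2"
    and \<sigma>_nonneg: "0 \<le> \<sigma>"
    and X_meas: "\<And>t. t \<in> {1..T} \<Longrightarrow> X t \<in> borel_measurable \<Omega>"
    and X_past: "\<And>t \<omega> \<omega>'. t \<in> {1..T} \<Longrightarrow> \<omega> \<in> space \<Omega> \<Longrightarrow> \<omega>' \<in> space \<Omega> \<Longrightarrow>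
                   (\<forall>s\<in>{1..<t}. \<omega> s = \<omega>' s) \<Longrightarrow> X t \<omega> = X t \<omega>'"
    and Delta_meas: "\<And>t. t \<in> {1..T} \<Longrightarrow> conv_Delta A X Orc \<mu> t \<in> borel_measurable \<Omega>"
    and Delta_int: "\<And>t. t \<in> {1..T} \<Longrightarrow> integrable \<Omega> (\<lambda>\<omega>. (norm (conv_Delta A X Orc \<mu> t \<omega>))\<^sup>2)"
begin

abbreviation "delta t \<omega> \<equiv> conv_Delta A X Orc \<mu> t \<omega>"
abbreviation "query t \<omega> \<equiv> conv_y A X Orc \<mu> t \<omega>"
abbreviation "sgrad t \<omega> \<equiv> conv_g A X Orc \<mu> t \<omega>"
abbreviation "noise t \<omega> \<equiv> sgrad t \<omega> - gradF (query t \<omega>)"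

lemma gradF_measurable[measurable]: "gradF \<in> borel_measurable borel"
proof -
  interpret sigma_finite_measure P
    using prob_space_P by (rule prob_space_imp_sigma_finite)
  have "(\<lambda>x. \<integral>\<xi>. Orc x \<xi> \<partial>P) \<in> borel_measurable borel"
    using O_meas by (intro borel_measurable_lebesgue_integral) simp
  then show ?thesis
    by (simp add: O_mean)
qed

lemma F_measurable[measurable]: "F \<in> borel_measurable borel"
  using grad by (intro borel_measurable_continuous_onI continuous_at_imp_continuous_on ballI)
    (blast intro: has_derivative_continuous)

lemma abs_inner_gradF_le: "\<bar>gradF x \<bullet> d\<bar> \<le> G * norm d"
  using Cauchy_Schwarz_ineq2[of "gradF x" d] bnd[of x] by (simp add: mult_right_mono order_trans)

lemma G_nonneg: "0 \<le> G"
  using abs_inner_gradF_le[of 0 0] norm_ge_zero[of "gradF 0"] bnd[of 0] by linarith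

lemma abs_F_diff_le: "\<bar>F x - F w\<bar> \<le> G * norm (x - w)"
proof -
  have "norm (F x - F w) \<le> G * norm (x - w) * measure lborel (cbox (0::real) 1)"
    using ftc[where x=x and w=w] abs_inner_gradF_le G_nonneg by (intro has_integral_bound) auto
  then show ?thesis
    by simp
qed

lemma integral_uniform_gradF: "(\<integral>s. gradF (x + s *\<^sub>R d) \<bullet> d \<partial>U) = F (x + d) - F x"
  using ftc[where x="x + d" and w=x] abs_inner_gradF_le
  by (intro integral_uniform_unit_interval[where B="G * norm d"]) auto

lemma conv_losses_cong:
  "m \<le> T \<Longrightarrow> \<omega> \<in> space \<Omega> \<Longrightarrow> \<omega>' \<in> space \<Omega> \<Longrightarrow> \<forall>s\<in>{1..m}. \<omega> s = \<omega>' s \<Longrightarrow>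
    conv_losses A X Orc \<mu> m \<omega> = conv_losses A X Orc \<mu> m \<omega>'"
proof (induction m)
  case (Suc m)
  then have "X (Suc m) \<omega> = X (Suc m) \<omega>'"
    by (intro X_past) auto
  with Suc show ?case
    by (simp add: Let_def)
qed simp

lemma delta_cong:
  "t \<in> {1..T} \<Longrightarrow> \<omega> \<in> space \<Omega> \<Longrightarrow> \<omega>' \<in> space \<Omega> \<Longrightarrow> \<forall>s\<in>{1..<t}. \<omega> s = \<omega>' s \<Longrightarrow>
    delta t \<omega> = delta t \<omega>'"
  unfolding conv_Delta_def by (subst conv_losses_cong) auto

lemma query_cong:
  "t \<in> {1..T} \<Longrightarrow> \<omega> \<in> space \<Omega> \<Longrightarrow> \<omega>' \<in> space \<Omega> \<Longrightarrow> \<forall>s\<in>{1..<t}. \<omega> s = \<omega>' s \<Longrightarrow>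
    fst (\<omega> t) = fst (\<omega>' t) \<Longrightarrow> query t \<omega> = query t \<omega>'"
  unfolding conv_y_def using delta_cong X_past by metis

lemma noise_cong:
  "t \<in> {1..T} \<Longrightarrow> \<omega> \<in> space \<Omega> \<Longrightarrow> \<omega>' \<in> space \<Omega> \<Longrightarrow> \<forall>s\<in>{1..t}. \<omega> s = \<omega>' s \<Longrightarrow>
    noise t \<omega> = noise t \<omega>'"
  unfolding conv_g_def using query_cong[of t \<omega> \<omega>'] by simp

lemma query_reseed:
  "t \<in> {1..T} \<Longrightarrow> \<omega> \<in> space \<Omega> \<Longrightarrow> \<xi> \<in> space P \<Longrightarrow> query t (reseed t \<xi> \<omega>) = query t \<omega>"
  using reseed_in_space[of t \<omega> \<xi>] by (intro query_cong) (auto simp: reseed_def)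

lemma delta_reseed:
  "t \<in> {1..T} \<Longrightarrow> \<omega> \<in> space \<Omega> \<Longrightarrow> \<xi> \<in> space P \<Longrightarrow> delta t (reseed t \<xi> \<omega>) = delta t \<omega>"
  using reseed_in_space[of t \<omega> \<xi>] by (intro delta_cong) (auto simp: reseed_def)

lemma noise_reseed_later:
  "s < t \<Longrightarrow> s \<in> {1..T} \<Longrightarrow> t \<in> {1..T} \<Longrightarrow> \<omega> \<in> space \<Omega> \<Longrightarrow> \<xi> \<in> space P \<Longrightarrow>
    noise s (reseed t \<xi> \<omega>) = noise s \<omega>"
  using reseed_in_space[of t \<omega> \<xi>] by (intro noise_cong) (auto simp: reseed_def)

lemma noise_reseed:
  "t \<in> {1..T} \<Longrightarrow> \<omega> \<in> space \<Omega> \<Longrightarrow> \<xi> \<in> space P \<Longrightarrow>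
    noise t (reseed t \<xi> \<omega>) = Orc (query t \<omega>) \<xi> - gradF (query t \<omega>)"
  using query_reseed[of t \<omega> \<xi>] by (simp add: conv_g_def reseed_def)

lemmas delta_measurable[measurable] = Delta_meas

lemma query_measurable[measurable]: "t \<in> {1..T} \<Longrightarrow> query t \<in> borel_measurable \<Omega>"
  unfolding conv_y_def using X_meas measurable_fst_round by measurable

lemma sgrad_measurable[measurable]: "t \<in> {1..T} \<Longrightarrow> sgrad t \<in> borel_measurable \<Omega>"
proof -
  assume t: "t \<in> {1..T}"
  have "(\<lambda>\<omega>. (query t \<omega>, snd (\<omega> t))) \<in> measurable \<Omega> (borel \<Otimes>\<^sub>M P)"
    using t by (intro measurable_Pair query_measurable measurable_snd_round)
  from measurable_compose[OF this O_meas] show ?thesis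
    by (simp add: conv_g_def)
qed

lemma square_integrable_delta: "t \<in> {1..T} \<Longrightarrow> square_integrable \<Omega> (delta t)"
  unfolding square_integrable_def using Delta_meas Delta_int by simp

lemma square_integrable_gradF_query:
  "t \<in> {1..T} \<Longrightarrow> square_integrable \<Omega> (\<lambda>\<omega>. gradF (query t \<omega>))"
  using finite_measure_\<Omega> bnd query_measurable by (intro square_integrable_bounded) auto

lemma noise_section:
  assumes "t \<in> {1..T}" "x \<in> space (Pi\<^sub>M ({1..T} - {t}) (\<lambda>_. Seed))" "\<xi>' \<in> space P" "\<xi> \<in> space P"
  shows "noise t (x(t := (s, \<xi>))) = Orc (query t (x(t := (s, \<xi>')))) \<xi> - gradF (query t (x(t := (s, \<xi>'))))"
proof -
  have "x(t := (s, \<xi>')) \<in> space \<Omega>"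
    using update_in_space[OF assms(1,2)] assms(3) by (simp add: space_Seed)
  then show ?thesis
    unfolding update_eq_reseed[of x t s \<xi> \<xi>'] by (rule noise_reseed[OF assms(1) _ assms(4)])
qed

lemma integral_noise_inner_eq_0:
  assumes t: "t \<in> {1..T}"
    and b_reseed: "\<And>\<omega> \<xi>. \<omega> \<in> space \<Omega> \<Longrightarrow> \<xi> \<in> space P \<Longrightarrow> b (reseed t \<xi> \<omega>) = b \<omega>"
    and int: "integrable \<Omega> (\<lambda>\<omega>. noise t \<omega> \<bullet> b \<omega>)"
  shows "(\<integral>\<omega>. noise t \<omega> \<bullet> b \<omega> \<partial>\<Omega>) = 0"
proof -
  interpret product_sigma_finite "\<lambda>_. Seed"
    by (rule product_sigma_finite_Seed)
  interpret P: prob_space P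
    by (rule prob_space_P)
  interpret pair_sigma_finite U P
    by (rule pair_sigma_finite_U_P)
  obtain \<xi>' where \<xi>': "\<xi>' \<in> space P"
    using P.not_empty by blast
  have "(\<integral>\<omega>. noise t \<omega> \<bullet> b \<omega> \<partial>\<Omega>) = (\<integral>\<omega>. 0 \<partial>\<Omega>)"
  proof (rule integral_PiM_eq_by_coordinate[OF finite_atLeastAtMost t int])
    fix x assume x: "x \<in> space (Pi\<^sub>M ({1..T} - {t}) (\<lambda>_. Seed))"
    have section_zero: "(\<integral>\<xi>. noise t (x(t := (s, \<xi>))) \<bullet> b (x(t := (s, \<xi>))) \<partial>P) = 0" for s
    proof -
      let ?\<omega> = "x(t := (s, \<xi>'))"
      have \<omega>: "?\<omega> \<in> space \<Omega>"
        using update_in_space[OF t x] \<xi>' by (simp add: space_Seed)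
      have "b (x(t := (s, \<xi>))) = b ?\<omega>" if "\<xi> \<in> space P" for \<xi>
        unfolding update_eq_reseed[of x t s \<xi> \<xi>'] by (rule b_reseed[OF \<omega> that])
      then have "(\<integral>\<xi>. noise t (x(t := (s, \<xi>))) \<bullet> b (x(t := (s, \<xi>))) \<partial>P)
          = (\<integral>\<xi>. (Orc (query t ?\<omega>) \<xi> - gradF (query t ?\<omega>)) \<bullet> b ?\<omega> \<partial>P)"
        using noise_section[OF t x \<xi>'] by (intro Bochner_Integration.integral_cong) auto
      also have "\<dots> = (\<integral>\<xi>. Orc (query t ?\<omega>) \<xi> - gradF (query t ?\<omega>) \<partial>P) \<bullet> b ?\<omega>"
        using O_int by (intro integral_inner_left) auto
      also have "\<dots> = 0"
        using O_int by (simp add: O_mean P.prob_space)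
      finally show ?thesis .
    qed
    show "(\<integral>y. noise t (x(t := y)) \<bullet> b (x(t := y)) \<partial>Seed) = (\<integral>y. 0 \<partial>Seed)"
    proof (cases "integrable Seed (\<lambda>y. noise t (x(t := y)) \<bullet> b (x(t := y)))")
      case True
      then show ?thesis
        by (simp add: integral_fst'[OF True, symmetric] section_zero)
    qed (simp add: not_integrable_integral_eq)
  qed simp
  then show ?thesis
    by simp
qed

lemma noise_variance_le:
  assumes t: "t \<in> {1..T}"
  shows "square_integrable \<Omega> (noise t)" "(\<integral>\<omega>. (norm (noise t \<omega>))\<^sup>2 \<partial>\<Omega>) \<le> \<sigma>\<^sup>2"
proof -
  interpret product_sigma_finite "\<lambda>_. Seed"
    by (rule product_sigma_finite_Seed)
  interpret P: prob_space P
    by (rule prob_space_P)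
  interpret U: prob_space U
    by (rule prob_space_U)
  obtain \<xi>' where \<xi>': "\<xi>' \<in> space P"
    using P.not_empty by blast
  have meas: "noise t \<in> borel_measurable \<Omega>"
    using t by measurable
  have section_le: "(\<integral>\<^sup>+\<xi>. ennreal ((norm (noise t (x(t := (s, \<xi>)))))\<^sup>2) \<partial>P) \<le> ennreal (\<sigma>\<^sup>2)"
    if x: "x \<in> space (Pi\<^sub>M ({1..T} - {t}) (\<lambda>_. Seed))" for x s
  proof -
    let ?z = "\<lambda>\<xi>. Orc (query t (x(t := (s, \<xi>')))) \<xi> - gradF (query t (x(t := (s, \<xi>'))))"
    have "(\<integral>\<^sup>+\<xi>. ennreal ((norm (noise t (x(t := (s, \<xi>)))))\<^sup>2) \<partial>P) = (\<integral>\<^sup>+\<xi>. ennreal ((norm (?z \<xi>))\<^sup>2) \<partial>P)"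
      using noise_section[OF t x \<xi>'] by (intro nn_integral_cong) simp
    also have "\<dots> = ennreal (\<integral>\<xi>. (norm (?z \<xi>))\<^sup>2 \<partial>P)"
      by (intro nn_integral_eq_integral O_var_int) auto
    also have "\<dots> \<le> ennreal (\<sigma>\<^sup>2)"
      using O_var by (rule ennreal_leI)
    finally show ?thesis .
  qed
  have nn: "(\<integral>\<^sup>+\<omega>. ennreal ((norm (noise t \<omega>))\<^sup>2) \<partial>\<Omega>) \<le> ennreal (\<sigma>\<^sup>2)"
  proof (rule nn_integral_PiM_le_by_coordinate[OF finite_atLeastAtMost t prob_space_PiM_Seed])
    show "(\<lambda>\<omega>. ennreal ((norm (noise t \<omega>))\<^sup>2)) \<in> borel_measurable \<Omega>"
      using meas by measurable
    fix x assume x: "x \<in> space (Pi\<^sub>M ({1..T} - {t}) (\<lambda>_. Seed))"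
    have "(\<lambda>y. ennreal ((norm (noise t (x(t := y))))\<^sup>2)) \<in> borel_measurable Seed"
      using measurable_update[OF t x meas] by measurable
    then have "(\<integral>\<^sup>+y. ennreal ((norm (noise t (x(t := y))))\<^sup>2) \<partial>Seed)
        = (\<integral>\<^sup>+s. (\<integral>\<^sup>+\<xi>. ennreal ((norm (noise t (x(t := (s, \<xi>)))))\<^sup>2) \<partial>P) \<partial>U)"
      by (rule P.nn_integral_fst[symmetric])
    also have "\<dots> \<le> (\<integral>\<^sup>+s. ennreal (\<sigma>\<^sup>2) \<partial>U)"
      using section_le[OF x] by (intro nn_integral_mono)
    also have "\<dots> = ennreal (\<sigma>\<^sup>2)"
      by (simp add: U.emeasure_space_1)
    finally show "(\<integral>\<^sup>+y. ennreal ((norm (noise t (x(t := y))))\<^sup>2) \<partial>Seed) \<le> ennreal (\<sigma>\<^sup>2)" .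
  qed
  have int: "integrable \<Omega> (\<lambda>\<omega>. (norm (noise t \<omega>))\<^sup>2)"
    using meas nn by (intro integrableI_nonneg) (auto simp: top_unique less_top[symmetric])
  then show "square_integrable \<Omega> (noise t)"
    using meas by (simp add: square_integrable_def)
  show "(\<integral>\<omega>. (norm (noise t \<omega>))\<^sup>2 \<partial>\<Omega>) \<le> \<sigma>\<^sup>2"
    using nn nn_integral_eq_integral[OF int] by simp
qed

lemma square_integrable_sgrad:
  assumes "t \<in> {1..T}"
  shows "square_integrable \<Omega> (sgrad t)"
proof -
  have "square_integrable \<Omega> (\<lambda>\<omega>. noise t \<omega> + gradF (query t \<omega>))"
    using assms by (intro square_integrable_add noise_variance_le square_integrable_gradF_query)
  then show ?thesis
    by simp
qed

lemma integral_noise_inner_noise_eq_0: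
  assumes "s \<in> {1..T}" "t \<in> {1..T}" "s \<noteq> t"
  shows "(\<integral>\<omega>. noise s \<omega> \<bullet> noise t \<omega> \<partial>\<Omega>) = 0"
proof -
  have "(\<integral>\<omega>. noise t \<omega> \<bullet> noise s \<omega> \<partial>\<Omega>) = 0" if "s < t" "s \<in> {1..T}" "t \<in> {1..T}" for s t
    using that noise_reseed_later[OF that]
    by (intro integral_noise_inner_eq_0 integrable_inner_square_integrable noise_variance_le) auto
  from this[of s t] this[of t s] assms show ?thesis
    by (cases "s < t") (auto simp: inner_commute)
qed

lemma integral_norm_weighted_noise_le:
  assumes n: "n \<le> T"
  shows "(\<integral>\<omega>. norm (\<Sum>s=1..n. c s *\<^sub>R noise s \<omega>) \<partial>\<Omega>) \<le> \<sigma> * sqrt (\<Sum>s=1..n. (c s)\<^sup>2)"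
proof -
  interpret prob_space \<Omega>
    by (rule prob_space_PiM_Seed)
  have sq: "square_integrable \<Omega> (\<lambda>\<omega>. c s *\<^sub>R noise s \<omega>)" if "s \<in> {1..n}" for s
    using that n by (intro square_integrable_scaleR noise_variance_le) auto
  have "(\<integral>\<omega>. (norm (\<Sum>s=1..n. c s *\<^sub>R noise s \<omega>))\<^sup>2 \<partial>\<Omega>)
      = (\<Sum>s=1..n. \<integral>\<omega>. (norm (c s *\<^sub>R noise s \<omega>))\<^sup>2 \<partial>\<Omega>)"
    using sq n integral_noise_inner_noise_eq_0 by (intro integral_norm_sum_orthogonal) auto
  also have "\<dots> \<le> (\<Sum>s=1..n. \<sigma>\<^sup>2 * (c s)\<^sup>2)"
  proof (rule sum_mono)
    fix s assume "s \<in> {1..n}"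
    then have "(\<integral>\<omega>. (norm (noise s \<omega>))\<^sup>2 \<partial>\<Omega>) \<le> \<sigma>\<^sup>2"
      using n noise_variance_le(2) by auto
    then have "(c s)\<^sup>2 * (\<integral>\<omega>. (norm (noise s \<omega>))\<^sup>2 \<partial>\<Omega>) \<le> (c s)\<^sup>2 * \<sigma>\<^sup>2"
      by (rule mult_left_mono) simp
    then show "(\<integral>\<omega>. (norm (c s *\<^sub>R noise s \<omega>))\<^sup>2 \<partial>\<Omega>) \<le> \<sigma>\<^sup>2 * (c s)\<^sup>2"
      by (simp add: power_mult_distrib mult.commute)
  qed
  finally have "sqrt (\<integral>\<omega>. (norm (\<Sum>s=1..n. c s *\<^sub>R noise s \<omega>))\<^sup>2 \<partial>\<Omega>) \<le> sqrt (\<sigma>\<^sup>2 * (\<Sum>s=1..n. (c s)\<^sup>2))"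
    by (simp add: sum_distrib_left)
  also have "\<dots> = \<sigma> * sqrt (\<Sum>s=1..n. (c s)\<^sup>2)"
    using \<sigma>_nonneg by (simp add: real_sqrt_mult)
  finally have "sqrt (\<integral>\<omega>. (norm (\<Sum>s=1..n. c s *\<^sub>R noise s \<omega>))\<^sup>2 \<partial>\<Omega>) \<le> \<sigma> * sqrt (\<Sum>s=1..n. (c s)\<^sup>2)" .
  moreover have "(\<integral>\<omega>. norm (\<Sum>s=1..n. c s *\<^sub>R noise s \<omega>) \<partial>\<Omega>)
      \<le> sqrt (\<integral>\<omega>. (norm (\<Sum>s=1..n. c s *\<^sub>R noise s \<omega>))\<^sup>2 \<partial>\<Omega>)"
    using sq by (intro integral_norm_le_sqrt_integral_power2 square_integrable_sum)
  ultimately show ?thesis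
    by linarith
qed

lemma integrable_F_step:
  assumes t: "t \<in> {1..T}"
  shows "integrable \<Omega> (\<lambda>\<omega>. F (conv_w A X Orc \<mu> t \<omega>) - F (X t \<omega>))"
proof (rule Bochner_Integration.integrable_bound)
  show "integrable \<Omega> (\<lambda>\<omega>. G * norm (delta t \<omega>))"
    using integrable_norm_square_integrable[OF finite_measure_\<Omega> square_integrable_delta[OF t]] by simp
  show "(\<lambda>\<omega>. F (conv_w A X Orc \<mu> t \<omega>) - F (X t \<omega>)) \<in> borel_measurable \<Omega>"
    using t X_meas[OF t] unfolding conv_w_def by measurable
  show "AE \<omega> in \<Omega>. norm (F (conv_w A X Orc \<mu> t \<omega>) - F (X t \<omega>)) \<le> norm (G * norm (delta t \<omega>))"
  proof (rule AE_I2)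
    fix \<omega>
    show "norm (F (conv_w A X Orc \<mu> t \<omega>) - F (X t \<omega>)) \<le> norm (G * norm (delta t \<omega>))"
      using abs_F_diff_le[of "X t \<omega> + delta t \<omega>" "X t \<omega>"] G_nonneg by (simp add: conv_w_def)
  qed
qed

lemma integral_F_step_eq:
  assumes t: "t \<in> {1..T}"
  shows "(\<integral>\<omega>. F (conv_w A X Orc \<mu> t \<omega>) - F (X t \<omega>) \<partial>\<Omega>) = (\<integral>\<omega>. gradF (query t \<omega>) \<bullet> delta t \<omega> \<partial>\<Omega>)"
proof -
  interpret product_sigma_finite "\<lambda>_. Seed"
    by (rule product_sigma_finite_Seed)
  interpret P: prob_space P
    by (rule prob_space_P)
  interpret Seed: prob_space Seed
    by (rule prob_space_Seed)
  obtain \<xi>' where \<xi>': "\<xi>' \<in> space P"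
    using P.not_empty by blast
  show ?thesis
  proof (rule integral_PiM_eq_by_coordinate[OF finite_atLeastAtMost t integrable_F_step[OF t]])
    show "integrable \<Omega> (\<lambda>\<omega>. gradF (query t \<omega>) \<bullet> delta t \<omega>)"
      using t by (intro integrable_inner_square_integrable square_integrable_gradF_query square_integrable_delta)
    fix x assume x: "x \<in> space (Pi\<^sub>M ({1..T} - {t}) (\<lambda>_. Seed))"
    define \<omega> where "\<omega> = x(t := (0, \<xi>'))"
    have \<omega>: "\<omega> \<in> space \<Omega>"
      unfolding \<omega>_def using update_in_space[OF t x] \<xi>' by (simp add: space_Seed)
    have past: "X t (x(t := y)) = X t \<omega>" "delta t (x(t := y)) = delta t \<omega>" if "y \<in> space Seed" for y
    proof -
      have "x(t := y) \<in> space \<Omega>" "\<forall>s\<in>{1..<t}. (x(t := y)) s = \<omega> s"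
        using update_in_space[OF t x that] by (auto simp: \<omega>_def)
      then show "X t (x(t := y)) = X t \<omega>" "delta t (x(t := y)) = delta t \<omega>"
        using X_past[OF t _ \<omega>] delta_cong[OF t _ \<omega>] by auto
    qed
    have "(\<integral>y. F (conv_w A X Orc \<mu> t (x(t := y))) - F (X t (x(t := y))) \<partial>Seed)
        = (\<integral>y. F (X t \<omega> + delta t \<omega>) - F (X t \<omega>) \<partial>Seed)"
      by (intro Bochner_Integration.integral_cong) (simp_all add: conv_w_def past)
    also have "\<dots> = (\<integral>s. gradF (X t \<omega> + s *\<^sub>R delta t \<omega>) \<bullet> delta t \<omega> \<partial>U)"
      by (simp add: Seed.prob_space integral_uniform_gradF)
    also have "\<dots> = (\<integral>y. gradF (X t \<omega> + fst y *\<^sub>R delta t \<omega>) \<bullet> delta t \<omega> \<partial>Seed)"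
      by (rule integral_Seed_fst[symmetric]) measurable
    also have "\<dots> = (\<integral>y. gradF (query t (x(t := y))) \<bullet> delta t (x(t := y)) \<partial>Seed)"
      by (intro Bochner_Integration.integral_cong) (simp_all add: conv_y_def past)
    finally show "(\<integral>y. F (conv_w A X Orc \<mu> t (x(t := y))) - F (X t (x(t := y))) \<partial>Seed)
        = (\<integral>y. gradF (query t (x(t := y))) \<bullet> delta t (x(t := y)) \<partial>Seed)" .
  qed
qed

lemma conv_loss_eq: "conv_loss A X Orc \<mu> t \<omega> = (\<lambda>v. sgrad t \<omega> \<bullet> v + \<mu> / 2 * (norm v)\<^sup>2)"
  by (simp add: fun_eq_iff conv_loss_def)

lemma integral_sgrad_inner_delta:
  assumes t: "t \<in> {1..T}"
  shows "integrable \<Omega> (\<lambda>\<omega>. sgrad t \<omega> \<bullet> delta t \<omega>)"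
    and "(\<integral>\<omega>. sgrad t \<omega> \<bullet> delta t \<omega> \<partial>\<Omega>) = (\<integral>\<omega>. F (conv_w A X Orc \<mu> t \<omega>) - F (X t \<omega>) \<partial>\<Omega>)"
proof -
  have int_grad: "integrable \<Omega> (\<lambda>\<omega>. gradF (query t \<omega>) \<bullet> delta t \<omega>)"
    using t by (intro integrable_inner_square_integrable square_integrable_gradF_query square_integrable_delta)
  have int_noise: "integrable \<Omega> (\<lambda>\<omega>. noise t \<omega> \<bullet> delta t \<omega>)"
    using t by (intro integrable_inner_square_integrable noise_variance_le square_integrable_delta)
  show "integrable \<Omega> (\<lambda>\<omega>. sgrad t \<omega> \<bullet> delta t \<omega>)"
    using t by (intro integrable_inner_square_integrable square_integrable_sgrad square_integrable_delta)
  have "(\<integral>\<omega>. sgrad t \<omega> \<bullet> delta t \<omega> \<partial>\<Omega>)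
      = (\<integral>\<omega>. gradF (query t \<omega>) \<bullet> delta t \<omega> + noise t \<omega> \<bullet> delta t \<omega> \<partial>\<Omega>)"
    by (simp add: inner_diff_left)
  also have "\<dots> = (\<integral>\<omega>. gradF (query t \<omega>) \<bullet> delta t \<omega> \<partial>\<Omega>) + (\<integral>\<omega>. noise t \<omega> \<bullet> delta t \<omega> \<partial>\<Omega>)"
    using int_grad int_noise by (rule Bochner_Integration.integral_add)
  also have "(\<integral>\<omega>. noise t \<omega> \<bullet> delta t \<omega> \<partial>\<Omega>) = 0"
    using t delta_reseed int_noise by (intro integral_noise_inner_eq_0) auto
  finally show "(\<integral>\<omega>. sgrad t \<omega> \<bullet> delta t \<omega> \<partial>\<Omega>) = (\<integral>\<omega>. F (conv_w A X Orc \<mu> t \<omega>) - F (X t \<omega>) \<partial>\<Omega>)"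
    using integral_F_step_eq[OF t] by simp
qed

lemma integral_discounted_progress_eq:
  assumes "n \<le> T"
  shows "(\<integral>\<omega>. (\<Sum>t=1..n. c t * (F (conv_w A X Orc \<mu> t \<omega>) - F (X t \<omega>))) \<partial>\<Omega>)
    = (\<integral>\<omega>. (\<Sum>t=1..n. c t * (sgrad t \<omega> \<bullet> delta t \<omega>)) \<partial>\<Omega>)"
proof -
  have "t \<in> {1..T}" if "t \<in> {1..n}" for t
    using that assms by auto
  then show ?thesis
    using integrable_F_step integral_sgrad_inner_delta
    by (simp add: Bochner_Integration.integral_sum)
qed

lemma integrable_regret_beta:
  assumes n: "n \<le> T" and u: "square_integrable \<Omega> u"
  shows "integrable \<Omega> (\<lambda>\<omega>. regret_beta \<beta> n (\<lambda>t. conv_loss A X Orc \<mu> t \<omega>) (\<lambda>t. delta t \<omega>) (u \<omega>))"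
proof -
  have t: "t \<in> {1..T}" if "t \<in> {1..n}" for t
    using that n by auto
  have int_delta: "integrable \<Omega> (\<lambda>\<omega>. (norm (delta t \<omega>))\<^sup>2)" if "t \<in> {1..n}" for t
    using t[OF that] by (rule Delta_int)
  show ?thesis
    unfolding regret_beta_def conv_loss_eq using t u
    by (intro Bochner_Integration.integrable_sum integrable_mult_right Bochner_Integration.integrable_diff
        Bochner_Integration.integrable_add integrable_inner_square_integrable square_integrable_sgrad
        square_integrable_delta int_delta) (auto simp: square_integrable_def)
qed

lemma integral_discounted_sgrad_le:
  assumes n: "n \<le> T" and \<beta>: "0 \<le> \<beta>" and \<mu>: "0 \<le> \<mu>" and D: "0 \<le> D"
  shows "(\<integral>\<omega>. (\<Sum>t=1..n. \<beta> ^ (n - t) * (sgrad t \<omega> \<bullet> delta t \<omega>)) \<partial>\<Omega>)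
    \<le> - D * (\<integral>\<omega>. norm (\<Sum>s=1..n. \<beta> ^ (n - s) *\<^sub>R gradF (query s \<omega>)) \<partial>\<Omega>)
      + D * (\<integral>\<omega>. norm (\<Sum>s=1..n. \<beta> ^ (n - s) *\<^sub>R noise s \<omega>) \<partial>\<Omega>)
      + (\<integral>\<omega>. regret_beta \<beta> n (\<lambda>t. conv_loss A X Orc \<mu> t \<omega>) (\<lambda>t. delta t \<omega>)
               (let S = (\<Sum>s=1..n. \<beta> ^ (n - s) *\<^sub>R gradF (query s \<omega>)) in - (D / norm S) *\<^sub>R S) \<partial>\<Omega>)
      + (\<integral>\<omega>. (\<Sum>t=1..n. \<beta> ^ (n - t) * (- \<mu> / 2 * (norm (delta t \<omega>))\<^sup>2 + \<mu> / 2 * D\<^sup>2)) \<partial>\<Omega>)"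
proof -
  define S where "S \<omega> = (\<Sum>s=1..n. \<beta> ^ (n - s) *\<^sub>R gradF (query s \<omega>))" for \<omega>
  define E where "E \<omega> = (\<Sum>s=1..n. \<beta> ^ (n - s) *\<^sub>R noise s \<omega>)" for \<omega>
  define u where "u \<omega> = - (D / norm (S \<omega>)) *\<^sub>R S \<omega>" for \<omega>
  define R where "R \<omega> = regret_beta \<beta> n (\<lambda>t. conv_loss A X Orc \<mu> t \<omega>) (\<lambda>t. delta t \<omega>) (u \<omega>)" for \<omega>
  define Q where "Q \<omega> = (\<Sum>t=1..n. \<beta> ^ (n - t) * (- \<mu> / 2 * (norm (delta t \<omega>))\<^sup>2 + \<mu> / 2 * D\<^sup>2))" for \<omega>
  have t: "t \<in> {1..T}" if "t \<in> {1..n}" for t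
    using that n by auto
  have sq_S: "square_integrable \<Omega> S"
    unfolding S_def using t by (intro square_integrable_sum square_integrable_scaleR square_integrable_gradF_query)
  have sq_E: "square_integrable \<Omega> E"
    unfolding E_def using t by (intro square_integrable_sum square_integrable_scaleR noise_variance_le)
  have int_R: "integrable \<Omega> R"
    unfolding R_def u_def using n square_integrable_scaleR_normalize[OF finite_measure_\<Omega> sq_S D]
    by (rule integrable_regret_beta)
  have int_Q: "integrable \<Omega> Q"
    unfolding Q_def using t finite_measure_\<Omega>
    by (intro Bochner_Integration.integrable_sum integrable_mult_right Bochner_Integration.integrable_add
        Delta_int finite_measure.integrable_const) auto
  have int_lhs: "integrable \<Omega> (\<lambda>\<omega>. \<Sum>t=1..n. \<beta> ^ (n - t) * (sgrad t \<omega> \<bullet> delta t \<omega>))"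
    using t integral_sgrad_inner_delta(1) by (intro Bochner_Integration.integrable_sum integrable_mult_right) auto
  have int_norm_S: "integrable \<Omega> (\<lambda>\<omega>. norm (S \<omega>))"
    by (rule integrable_norm_square_integrable[OF finite_measure_\<Omega> sq_S])
  have int_norm_E: "integrable \<Omega> (\<lambda>\<omega>. norm (E \<omega>))"
    by (rule integrable_norm_square_integrable[OF finite_measure_\<Omega> sq_E])
  have pointwise: "(\<Sum>t=1..n. \<beta> ^ (n - t) * (sgrad t \<omega> \<bullet> delta t \<omega>))
      \<le> - D * norm (S \<omega>) + D * norm (E \<omega>) + R \<omega> + Q \<omega>" for \<omega>
    unfolding S_def E_def u_def R_def Q_def conv_loss_eq using \<beta> \<mu> D
    by (rule sum_inner_le_normalized_regret_beta)
  have "(\<integral>\<omega>. (\<Sum>t=1..n. \<beta> ^ (n - t) * (sgrad t \<omega> \<bullet> delta t \<omega>)) \<partial>\<Omega>)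
      \<le> (\<integral>\<omega>. - D * norm (S \<omega>) + D * norm (E \<omega>) + R \<omega> + Q \<omega> \<partial>\<Omega>)"
    using int_lhs int_norm_S int_norm_E int_R int_Q pointwise
    by (intro integral_mono Bochner_Integration.integrable_add integrable_mult_right)
  also have "\<dots> = - D * (\<integral>\<omega>. norm (S \<omega>) \<partial>\<Omega>) + D * (\<integral>\<omega>. norm (E \<omega>) \<partial>\<Omega>)
      + (\<integral>\<omega>. R \<omega> \<partial>\<Omega>) + (\<integral>\<omega>. Q \<omega> \<partial>\<Omega>)"
    using int_norm_S int_norm_E int_R int_Q by simp
  finally show ?thesis
    unfolding S_def E_def R_def u_def Q_def Let_def .
qed

lemma discounted_progress_bound:
  assumes n: "n \<in> {1..T}" and \<beta>: "0 < \<beta>" "\<beta> < 1" and D: "0 < D" and \<mu>: "0 \<le> \<mu>"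
  shows "(\<integral>\<omega>. (\<Sum>t=1..n. \<beta> ^ (n - t) * (F (conv_w A X Orc \<mu> t \<omega>) - F (X t \<omega>))) \<partial>\<Omega>)
     \<le> - D * (1 - \<beta> ^ n) / (1 - \<beta>) *
          (\<integral>\<omega>. norm (\<Sum>s=1..n. qw \<beta> n s *\<^sub>R gradF (query s \<omega>)) \<partial>\<Omega>)
       + \<sigma> * D / sqrt (1 - \<beta>)
       + (\<integral>\<omega>. regret_beta \<beta> n (\<lambda>t. conv_loss A X Orc \<mu> t \<omega>) (\<lambda>t. delta t \<omega>)
               (let S = (\<Sum>s=1..n. \<beta> ^ (n - s) *\<^sub>R gradF (query s \<omega>))
                in - (D / norm S) *\<^sub>R S) \<partial>\<Omega>)
       + (\<integral>\<omega>. (\<Sum>t=1..n. \<beta> ^ (n - t) * (- \<mu> / 2 * (norm (delta t \<omega>))\<^sup>2 + \<mu> / 2 * D\<^sup>2)) \<partial>\<Omega>)"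
    (is "?progress \<le> ?gap + _ + ?regret + ?quadratic")
proof -
  have progress: "?progress = (\<integral>\<omega>. (\<Sum>t=1..n. \<beta> ^ (n - t) * (sgrad t \<omega> \<bullet> delta t \<omega>)) \<partial>\<Omega>)"
    using n by (intro integral_discounted_progress_eq) auto
  have split: "(\<integral>\<omega>. (\<Sum>t=1..n. \<beta> ^ (n - t) * (sgrad t \<omega> \<bullet> delta t \<omega>)) \<partial>\<Omega>)
      \<le> - D * (\<integral>\<omega>. norm (\<Sum>s=1..n. \<beta> ^ (n - s) *\<^sub>R gradF (query s \<omega>)) \<partial>\<Omega>)
        + D * (\<integral>\<omega>. norm (\<Sum>s=1..n. \<beta> ^ (n - s) *\<^sub>R noise s \<omega>) \<partial>\<Omega>) + ?regret + ?quadratic"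
    using n \<beta> D \<mu> by (intro integral_discounted_sgrad_le) auto
  have "0 < n"
    using n by simp
  then have gap: "- D * (\<integral>\<omega>. norm (\<Sum>s=1..n. \<beta> ^ (n - s) *\<^sub>R gradF (query s \<omega>)) \<partial>\<Omega>) = ?gap"
    by (simp only: norm_sum_discount_eq_norm_sum_qw[OF \<beta>]) simp
  have "sqrt (\<Sum>s=1..n. (\<beta> ^ (n - s))\<^sup>2) \<le> 1 / sqrt (1 - \<beta>)"
    using real_sqrt_le_mono[OF sum_power2_discount_le[of \<beta> n]] \<beta> by (simp add: real_sqrt_divide)
  then have "\<sigma> * sqrt (\<Sum>s=1..n. (\<beta> ^ (n - s))\<^sup>2) \<le> \<sigma> / sqrt (1 - \<beta>)"
    using mult_left_mono \<sigma>_nonneg by fastforce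
  with n have noise_bound: "(\<integral>\<omega>. norm (\<Sum>s=1..n. \<beta> ^ (n - s) *\<^sub>R noise s \<omega>) \<partial>\<Omega>) \<le> \<sigma> / sqrt (1 - \<beta>)"
    using integral_norm_weighted_noise_le[of n "\<lambda>s. \<beta> ^ (n - s)"] by simp
  then have noise: "D * (\<integral>\<omega>. norm (\<Sum>s=1..n. \<beta> ^ (n - s) *\<^sub>R noise s \<omega>) \<partial>\<Omega>) \<le> \<sigma> * D / sqrt (1 - \<beta>)"
    using mult_left_mono[OF noise_bound, of D] D by (simp add: mult.commute[of \<sigma> D])
  show ?thesis
    using progress split gap noise by linarith
qed

end

theorem lemma5:
  fixes F :: "'a::euclidean_space \<Rightarrow> real"
    and gradF :: "'a \<Rightarrow> 'a"
    and G \<sigma> \<beta> D \<mu> :: real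
    and T n :: nat
    and P :: "'b measure"
    and Orc :: "'a \<Rightarrow> 'b \<Rightarrow> 'a"
    and A :: "('a \<Rightarrow> real) list \<Rightarrow> 'a"
    and X :: "nat \<Rightarrow> (nat \<Rightarrow> real \<times> 'b) \<Rightarrow> 'a"
  defines "\<Omega> \<equiv> (\<Pi>\<^sub>M i\<in>{1..T}. (uniform_measure lborel {0..1::real} \<Otimes>\<^sub>M P))"
  assumes grad: "\<And>x. (F has_derivative (\<lambda>h. gradF x \<bullet> h)) (at x)"
    and ftc: "\<And>x w. ((\<lambda>t. gradF (w + t *\<^sub>R (x - w)) \<bullet> (x - w)) has_integral (F x - F w)) {0..1}"
    and bnd: "\<And>x. norm (gradF x) \<le> G"
    and P: "prob_space P"
    and O_meas: "(\<lambda>(x, \<xi>). Orc x \<xi>) \<in> borel_measurable (borel \<Otimes>\<^sub>M P)"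
    and O_int: "\<And>x. integrable P (Orc x)"
    and O_mean: "\<And>x. (\<integral>\<xi>. Orc x \<xi> \<partial>P) = gradF x"
    and O_var_int: "\<And>x. integrable P (\<lambda>\<xi>. (norm (Orc x \<xi> - gradF x))\<^sup>2)"
    and O_var: "\<And>x. (\<integral>\<xi>. (norm (Orc x \<xi> - gradF x))\<^sup>2 \<partial>P) \<le> \<sigma>\<^sup>2"
    and \<sigma>: "0 \<le> \<sigma>"
    and \<beta>: "0 < \<beta>" "\<beta> < 1" and D: "0 < D" and \<mu>: "0 \<le> \<mu>"
    and X_meas: "\<And>t. t \<in> {1..T} \<Longrightarrow> X t \<in> borel_measurable \<Omega>"
    and X_past: "\<And>t \<omega> \<omega>'. t \<in> {1..T} \<Longrightarrow> \<omega> \<in> space \<Omega> \<Longrightarrow> \<omega>' \<in> space \<Omega> \<Longrightarrow>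
                   (\<forall>s\<in>{1..<t}. \<omega> s = \<omega>' s) \<Longrightarrow> X t \<omega> = X t \<omega>'"
    and Delta_meas: "\<And>t. t \<in> {1..T} \<Longrightarrow> conv_Delta A X Orc \<mu> t \<in> borel_measurable \<Omega>"
    and Delta_int: "\<And>t. t \<in> {1..T} \<Longrightarrow> integrable \<Omega> (\<lambda>\<omega>. (norm (conv_Delta A X Orc \<mu> t \<omega>))\<^sup>2)"
    and n: "n \<in> {1..T}"
  shows
    "(\<integral>\<omega>. (\<Sum>t=1..n. \<beta> ^ (n - t) * (F (conv_w A X Orc \<mu> t \<omega>) - F (X t \<omega>))) \<partial>\<Omega>)
     \<le> - D * (1 - \<beta> ^ n) / (1 - \<beta>) *
          (\<integral>\<omega>. norm (\<Sum>s=1..n. qw \<beta> n s *\<^sub>R gradF (conv_y A X Orc \<mu> s \<omega>)) \<partial>\<Omega>)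
       + \<sigma> * D / sqrt (1 - \<beta>)
       + (\<integral>\<omega>. regret_beta \<beta> n (\<lambda>t. conv_loss A X Orc \<mu> t \<omega>) (\<lambda>t. conv_Delta A X Orc \<mu> t \<omega>)
               (let S = (\<Sum>s=1..n. \<beta> ^ (n - s) *\<^sub>R gradF (conv_y A X Orc \<mu> s \<omega>))
                in - (D / norm S) *\<^sub>R S) \<partial>\<Omega>)
       + (\<integral>\<omega>. (\<Sum>t=1..n. \<beta> ^ (n - t) * (- \<mu> / 2 * (norm (conv_Delta A X Orc \<mu> t \<omega>))\<^sup>2
                                          + \<mu> / 2 * D\<^sup>2)) \<partial>\<Omega>)"
proof -
  interpret conversion P T F gradF G \<sigma> \<mu> Orc A X
    by (intro conversion.intro seed_space.intro conversion_axioms.intro P grad ftc bnd O_meas O_int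
        O_mean O_var_int O_var \<sigma> X_meas[unfolded \<Omega>_def] X_past[unfolded \<Omega>_def]
        Delta_meas[unfolded \<Omega>_def] Delta_int[unfolded \<Omega>_def])
  show ?thesis
    unfolding \<Omega>_def using n \<beta> D \<mu> by (rule discounted_progress_bound)
qed

end
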